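(* Let $m$ be a non-negative integer and $n$ a positive rational number. Define Ramanujan's integral $$\mathbf{R}_{C}(m,n)=\int_{0}^{\infty}x^{m}\frac{\cos(\pi nx)}{-1+\exp(2\pi\sqrt{x})}\,dx.$$ Then $$\mathbf{R}_{C}(m,n)=-(n\pi)^{-m-1}\sum_{k=0}^{\infty}\left[\sum_{\ell=0}^{\infty}\frac{1}{\ell!}\left\{\frac{-(2\pi+2\pi k)}{\sqrt{n\pi}}\right\}^{\ell}\Gamma\!\left(m+1+\frac{\ell}{2}\right)\sin\!\left(\frac{m\pi}{2}+\frac{\ell\pi}{4}\right)\right]$$ and $$\mathbf{R}_{C}(m,n)=-(n\pi)^{-m-1}\sum_{k=0}^{\infty}\left[\sum_{j=0}^{3}\frac{1}{j!}\left\{\frac{-(2\pi+2\pi k)}{\sqrt{n\pi}}\right\}^{j}\Gamma\!\left(m+1+\frac{j}{2}\right)\sin\!\left(\frac{m\pi}{2}+\frac{j\pi}{4}\right)G_j\!\left(-\frac{\pi^{2}(k+1)^{4}}{4n^{2}}\right)\right],$$ where $G_0(z)={}_{2}F_{3}\!\left(\tfrac{m+1}{2},\tfrac{m+2}{2};\tfrac14,\tfrac12,\tfrac34;z\right)$, $G_1(z)={}_{2}F_{3}\!\left(\tfrac{2m+3}{4},\tfrac{2m+5}{4};\tfrac12,\tfrac34,\tfrac54;z\right)$, $G_2(z)={}_{2}F_{3}\!\left(\tfrac{m+2}{2},\tfrac{m+3}{2};\tfrac34,\tfrac54,\tfrac32;z\right)$, $G_3(z)={}_{2}F_{3}\!\left(\tfrac{2m+5}{4},\tfrac{2m+7}{4};\tfrac54,\tfrac32,\tfrac74;z\right)$.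 (Here $(k+1)^4=\{(2)_k/(1)_k\}^4$, the form used in the paper.)
   Context: For $\alpha\in\mathbb{C}$, $(\alpha)_n=\alpha(\alpha+1)\cdots(\alpha+n-1)$, $(\alpha)_0=1$. ${}_{p}F_{q}(\alpha_1,\dots,\alpha_p;\beta_1,\dots,\beta_q;z)=\sum_{n\ge0}\frac{\prod_i(\alpha_i)_n}{\prod_j(\beta_j)_n}\frac{z^n}{n!}$, entire in $z$ for $p\le q$. $\Gamma$ is Euler's Gamma function. *)

theory Defs
  imports "HOL-Analysis.Analysis"
begin

definition hyp2F3 :: "real \<Rightarrow> real \<Rightarrow> real \<Rightarrow> real \<Rightarrow> real \<Rightarrow> real \<Rightarrow> real" where
  "hyp2F3 a1 a2 b1 b2 b3 z =
     (\<Sum>j. pochhammer a1 j * pochhammer a2 j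
            / (pochhammer b1 j * pochhammer b2 j * pochhammer b3 j) * z ^ j / fact j)"

definition RamanujanRC :: "nat \<Rightarrow> real \<Rightarrow> real" where
  "RamanujanRC m n =
     integral {0<..} (\<lambda>x::real. x ^ m * cos (pi * n * x) / (- 1 + exp (2 * pi * sqrt x)))"

definition G :: "nat \<Rightarrow> nat \<Rightarrow> real \<Rightarrow> real" where
  "G m j z =
     (if j = 0 then hyp2F3 ((real m + 1) / 2) ((real m + 2) / 2) (1/4) (1/2) (3/4) z
      else if j = 1 then hyp2F3 ((2 * real m + 3) / 4) ((2 * real m + 5) / 4) (1/2) (3/4) (5/4) z
      else if j = 2 then hyp2F3 ((real m + 2) / 2) ((real m + 3) / 2) (3/4) (5/4) (3/2) z
      else hyp2F3 ((2 * real m + 5) / 4) ((2 * real m + 7) / 4) (5/4) (3/2) (7/4) z)"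

end

theory Submission
  imports Defs "HOL-Real_Asymp.Real_Asymp"
begin

text \<open>
  Expanding \<open>1 / (exp (2 \<pi> sqrt x) - 1) = \<Sum>k. exp (- 2 \<pi> (k + 1) sqrt x)\<close> and integrating termwise
  (dominated convergence) reduces \<open>R\<^sub>C(m, n)\<close> to the integrals \<open>\<integral> x\<^sup>m cos (b x) exp (- a sqrt x) dx\<close> with
  \<open>a = 2 \<pi> (k + 1)\<close>, \<open>b = n \<pi>\<close>. Such an integral is the real part of the Laplace transform of
  \<open>x\<^sup>m exp (- a sqrt x)\<close> at \<open>c = - \<i> b\<close>. For \<open>Re c > 0\<close>, expanding \<open>exp (- a sqrt x)\<close> and using
  \<open>\<integral> x\<^sup>s\<^sup>-\<^sup>1 exp (- c x) dx = \<Gamma>(s) c\<^sup>-\<^sup>s\<close> turns the transform into an entire power series in \<open>c\<^sup>-\<^sup>1\<^sup>/\<^sup>2\<close>,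
  so it extends continuously to the imaginary axis, where its real part is the inner series of the
  theorem. Splitting that series by the residue of the summation index mod 4 and applying the
  duplication formula for \<open>\<Gamma>\<close> yields the four \<open>\<^sub>2F\<^sub>3\<close> series \<open>G\<^sub>j\<close>.
\<close>
lemma Gamma_integral_scaled:
  fixes s l :: real
  assumes s: "s > 0" and l: "l > 0"
  shows "((\<lambda>x. x powr (s - 1) * exp (- l * x)) has_integral Gamma s * l powr (- s)) {0<..}"
proof -
  define f where "f = (\<lambda>y::real. y powr (s - 1) / exp y)"
  have "(f has_integral Gamma s) {0<..}"
    using has_integral_interior[of "{0::real..}" f] Gamma_integral_real[OF s]
    by (simp add: f_def)
  moreover have "f absolutely_integrable_on {0<..}"
    using calculation by (intro nonnegative_absolutely_integrable_1) (auto simp: f_def)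
  moreover have "(\<lambda>x. l * x) ` {0<..} = {0<..}"
    using l by (auto simp: image_iff intro!: bexI[of _ "_ / l"])
  ultimately have "(\<lambda>x. \<bar>l\<bar> * f (l * x)) absolutely_integrable_on {0<..} \<and>
                   integral {0<..} (\<lambda>x. \<bar>l\<bar> * f (l * x)) = Gamma s"
    using l by (subst has_absolute_integral_change_of_variables_1')
      (auto intro!: derivative_eq_intros inj_onI simp: integral_unique)
  then have "((\<lambda>x. \<bar>l\<bar> * f (l * x) * l powr (- s)) has_integral Gamma s * l powr (- s)) {0<..}"
    by (intro has_integral_mult_left) (auto simp: has_integral_integral absolutely_integrable_on_def)
  then show ?thesis
    by (rule has_integral_spike[OF negligible_empty, rotated])
      (use l in \<open>auto simp: f_def powr_mult powr_diff powr_minus exp_minus field_simps\<close>)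
qed

lemma has_integral_sums_dominated:
  fixes f :: "nat \<Rightarrow> 'n::euclidean_space \<Rightarrow> 'm::euclidean_space" and g :: "'n \<Rightarrow> 'm"
  assumes f: "\<And>k. (f k has_integral I k) S" and h: "h integrable_on S"
    and bound: "\<And>N x. x \<in> S \<Longrightarrow> norm (\<Sum>k<N. f k x) \<le> h x"
    and lim: "\<And>x. x \<in> S \<Longrightarrow> (\<lambda>k. f k x) sums g x"
  shows "I sums integral S g" and "(g has_integral (\<Sum>k. I k)) S"
proof -
  have partial: "((\<lambda>x. \<Sum>k<N. f k x) has_integral (\<Sum>k<N. I k)) S" for N
    by (intro has_integral_sum f) auto
  have g: "g integrable_on S" and "(\<lambda>N. integral S (\<lambda>x. \<Sum>k<N. f k x)) \<longlonglongrightarrow> integral S g"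
    using dominated_convergence[where f = "\<lambda>N x. \<Sum>k<N. f k x" and g = g, OF _ h bound] partial lim
    by (auto simp: sums_def integrable_on_def)
  moreover have "integral S (\<lambda>x. \<Sum>k<N. f k x) = (\<Sum>k<N. I k)" for N
    using partial by (rule integral_unique)
  ultimately show I: "I sums integral S g"
    by (simp add: sums_def)
  show "(g has_integral (\<Sum>k. I k)) S"
    using g by (simp add: sums_unique[OF I, symmetric] has_integral_integral)
qed

lemma sum_power_div_fact_le_exp:
  fixes y :: real
  assumes "finite A" and "y \<ge> 0"
  shows "(\<Sum>k\<in>A. y ^ k / fact k) \<le> exp y"
proof -
  have "(\<lambda>k. y ^ k / fact k) sums exp y"
    using exp_converges[of y] by (simp add: divide_inverse_commute)
  then show ?thesis
    using assms sum_le_suminf[of "\<lambda>k. y ^ k / fact k" A] by (auto simp: sums_iff)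
qed

lemma norm_exp_partial_sum_le:
  fixes z :: "'a::{real_normed_field,banach}"
  shows "norm (\<Sum>k<N. z ^ k / fact k) \<le> exp (norm z)"
proof -
  have "norm (\<Sum>k<N. z ^ k / fact k) \<le> (\<Sum>k<N. norm z ^ k / fact k)"
    by (rule order_trans[OF norm_sum]) (simp add: norm_divide norm_power)
  also have "\<dots> \<le> exp (norm z)"
    by (intro sum_power_div_fact_le_exp) auto
  finally show ?thesis .
qed

lemma gbinomial_uminus_mult_power:
  fixes s :: real and u :: complex
  shows "(- of_real s gchoose k) * (- u) ^ k = of_real (pochhammer s k / fact k) * u ^ k"
proof -
  have "(- of_real s gchoose k) * (- u) ^ k = ((-1) ^ k * (-1) ^ k) * (of_real (pochhammer s k) / fact k * u ^ k)"
    by (subst gbinomial_pochhammer)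
      (simp only: minus_minus pochhammer_of_real power_minus[of u] mult_ac times_divide_eq_left times_divide_eq_right)
  then show ?thesis
    by (simp add: power_mult_distrib[symmetric])
qed

lemma Gamma_powr_series:
  fixes s l :: real and w :: complex
  assumes s: "s > 0" and l: "l > 0" and wl: "cmod w < l"
  shows "(\<lambda>k. of_real (Gamma (s + k) * l powr (- (s + k)) / fact k) * w ^ k)
           sums (of_real (Gamma s) * (of_real l - w) powr (- of_real s))"
proof -
  have real_coefficient: "Gamma (s + k) * l powr (- (s + k)) = Gamma s * l powr (- s) * pochhammer s k / l ^ k" for k
  proof -
    have "s \<notin> \<int>\<^sub>\<le>\<^sub>0"
      using s by (auto elim!: nonpos_Ints_cases)
    then have "Gamma (s + k) = Gamma s * pochhammer s k"
      using pochhammer_Gamma[of s k] Gamma_real_pos[OF s] by simp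
    moreover have "l powr (- (s + k)) = l powr (- s) / l ^ k"
      using l by (simp add: powr_diff powr_minus powr_realpow divide_inverse)
    ultimately show ?thesis
      by simp
  qed
  have "of_real (Gamma (s + k) * l powr (- (s + k)) / fact k) * w ^ k
          = of_real (Gamma s * l powr (- s)) * ((- of_real s gchoose k) * (- (w / of_real l)) ^ k)" for k
    using l arg_cong[where f = complex_of_real, OF real_coefficient[of k]]
    unfolding gbinomial_uminus_mult_power by (simp add: field_simps)
  moreover have "(\<lambda>k. of_real (Gamma s * l powr (- s)) * ((- of_real s gchoose k) * (- (w / of_real l)) ^ k))
                   sums (of_real (Gamma s * l powr (- s)) * (1 - w / of_real l) powr (- of_real s))"
    using wl l gen_binomial_complex[of "- (w / of_real l)" "- of_real s"] by (intro sums_mult) (simp add: norm_divide)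
  moreover have "of_real (l powr (- s)) * (1 - w / of_real l) powr (- of_real s) = (of_real l - w) powr (- of_real s)"
  proof -
    have "of_real l * (1 - w / of_real l) = of_real l - w"
      using l by (simp add: field_simps)
    moreover have "(of_real l * (1 - w / of_real l)) powr (- of_real s)
                     = of_real (l powr (- s)) * (1 - w / of_real l) powr (- of_real s)"
      using l by (simp add: powr_times_real_left powr_of_real[symmetric])
    ultimately show ?thesis
      by simp
  qed
  ultimately show ?thesis
    by (simp only: of_real_mult mult.assoc)
qed

text \<open>Writing \<open>c = l - w\<close> with \<open>l = \<bar>c\<bar>\<^sup>2 / Re c\<close> makes \<open>\<bar>w\<bar> < l\<close>, so \<open>exp (- c x) = exp (- l x) exp (w x)\<close>
  can be expanded in powers of \<open>w x\<close> and integrated termwise against real Gamma integrals.\<close>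
lemma Gamma_integral_complex_scaled:
  fixes s :: real and c :: complex
  assumes s: "s > 0" and c: "Re c > 0"
  shows "((\<lambda>x. of_real (x powr (s - 1)) * exp (- c * of_real x))
           has_integral of_real (Gamma s) * c powr (- of_real s)) {0<..}"
proof -
  define l where "l = (cmod c)\<^sup>2 / Re c"
  define w where "w = of_real l - c"
  define f where "f k x = of_real (x powr (s - 1) * exp (- l * x)) * ((w * of_real x) ^ k / fact k)" for k x
  have l: "l > 0"
    using c by (auto simp: l_def intro!: divide_pos_pos)
  have "(cmod w)\<^sup>2 = (l - Re c)\<^sup>2 + (Im c)\<^sup>2"
    by (simp add: w_def cmod_power2)
  also have "\<dots> = l\<^sup>2 - (cmod c)\<^sup>2"
    using c cmod_power2[of c] by (simp add: l_def field_simps power2_eq_square)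
  finally have "(cmod w)\<^sup>2 < l\<^sup>2"
    using c by auto
  then have wl: "cmod w < l"
    using l by (simp add: power_less_imp_less_base)
  have term_integral:
    "(f k has_integral of_real (Gamma (s + k) * l powr (- (s + k)) / fact k) * w ^ k) {0<..}" for k
  proof -
    have "((\<lambda>x. of_real (x powr (s + k - 1) * exp (- l * x) / fact k) * w ^ k) has_integral
            of_real (Gamma (s + k) * l powr (- (s + k)) / fact k) * w ^ k) {0<..}"
      using s l by (intro has_integral_mult_left has_integral_linear[OF _ bounded_linear_of_real, unfolded o_def]
                          has_integral_divide Gamma_integral_scaled) auto
    moreover have "x powr (s + k - 1) = x powr (s - 1) * x ^ k" if "x > 0" for x
      using that by (simp add: powr_add[symmetric] powr_realpow[symmetric] algebra_simps)
    ultimately show ?thesis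
      unfolding f_def by (elim has_integral_spike[OF negligible_empty, rotated]) (auto simp: power_mult_distrib)
  qed
  have dominating: "(\<lambda>x. x powr (s - 1) * exp (- (l - cmod w) * x)) integrable_on {0<..}"
    using Gamma_integral_scaled[OF s, of "l - cmod w"] wl by auto
  have bound: "norm (\<Sum>k<N. f k x) \<le> x powr (s - 1) * exp (- (l - cmod w) * x)" if "x \<in> {0<..}" for N x
  proof -
    have "norm (\<Sum>k<N. f k x) = x powr (s - 1) * exp (- l * x) * norm (\<Sum>k<N. (w * of_real x) ^ k / fact k)"
      unfolding f_def sum_distrib_left[symmetric] norm_mult norm_of_real using that by simp
    also have "\<dots> \<le> x powr (s - 1) * exp (- l * x) * exp (cmod w * x)"
      using norm_exp_partial_sum_le[where N = N and z = "w * of_real x"] that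
      by (intro mult_left_mono) (auto simp: norm_mult)
    also have "\<dots> = x powr (s - 1) * exp (- (l - cmod w) * x)"
      by (simp only: mult.assoc exp_add[symmetric]) (simp add: algebra_simps)
    finally show ?thesis .
  qed
  have pointwise: "(\<lambda>k. f k x) sums (of_real (x powr (s - 1)) * exp (- c * of_real x))" for x
  proof -
    have "(\<lambda>k. (w * of_real x) ^ k / fact k) sums exp (w * of_real x)"
      using exp_converges[of "w * of_real x"] by (simp add: scaleR_conv_of_real divide_inverse_commute)
    then have "(\<lambda>k. f k x) sums (of_real (x powr (s - 1) * exp (- l * x)) * exp (w * of_real x))"
      unfolding f_def by (rule sums_mult)
    moreover have "of_real (exp (- (l * x))) * exp (w * of_real x) = exp (- (c * of_real x))"
      by (simp add: w_def exp_add[symmetric] exp_of_real[symmetric] algebra_simps)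
    ultimately show ?thesis
      by (simp add: mult.assoc)
  qed
  have "of_real l - w = c"
    by (simp add: w_def)
  then show ?thesis
    using has_integral_sums_dominated(2)[OF term_integral dominating bound pointwise]
      sums_unique[OF Gamma_powr_series[OF s l wl]] by simp
qed

lemma summable_ratio_test_step2:
  fixes f :: "nat \<Rightarrow> real"
  assumes nonneg: "\<And>n. f n \<ge> 0" and "c < 1"
    and step: "\<And>n. n \<ge> N \<Longrightarrow> f (n + 2) \<le> c * f n"
  shows "summable f"
proof -
  define h where "h i = f (2 * i) + f (2 * i + 1)" for i
  have "summable h"
  proof (rule summable_ratio_test[OF \<open>c < 1\<close>])
    fix i assume "i \<ge> N"
    then have "h (Suc i) \<le> c * f (2 * i) + c * f (2 * i + 1)"
      using step[of "2 * i"] step[of "2 * i + 1"] by (simp add: h_def algebra_simps)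
    then show "norm (h (Suc i)) \<le> c * norm (h i)"
      using nonneg by (simp add: h_def algebra_simps)
  qed
  show ?thesis
  proof (rule summableI_nonneg_bounded[OF nonneg])
    fix n
    have "(\<Sum>k<n. f k) \<le> (\<Sum>k<2 * n. f k)"
      using nonneg by (intro sum_mono2) auto
    also have "\<dots> = (\<Sum>i<n. h i)"
      using sum_split_even_odd[where f = f and g = f and n = n] by (simp add: h_def sum.distrib)
    also have "\<dots> \<le> suminf h"
      by (rule sum_le_suminf[OF \<open>summable h\<close>]) (use nonneg in \<open>auto simp: h_def\<close>)
    finally show "(\<Sum>k<n. f k) \<le> suminf h" .
  qed
qed

lemma summable_Gamma_half_series:
  fixes a R :: real
  assumes a: "a > 0" and R: "R \<ge> 0"
  shows "summable (\<lambda>l. Gamma (a + l / 2) / fact l * R ^ l)"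
proof -
  define u where "u l = Gamma (a + l / 2) / fact l * R ^ l" for l :: nat
  define \<rho> where "\<rho> l = R\<^sup>2 * (a + l / 2) / ((l + 1) * (l + 2))" for l :: nat
  have u_step: "u (l + 2) = \<rho> l * u l" for l
  proof -
    have "a + l / 2 \<notin> \<int>\<^sub>\<le>\<^sub>0"
      using a by (auto elim!: nonpos_Ints_cases)
    then have Gamma_step: "Gamma (a + real (l + 2) / 2) = (a + l / 2) * Gamma (a + l / 2)"
      using Gamma_plus1[of "a + l / 2"] by (simp add: field_simps)
    have fact_step: "(fact (l + 2) :: real) = (l + 1) * (l + 2) * fact l"
      by (simp add: algebra_simps)
    show ?thesis
      unfolding u_def \<rho>_def Gamma_step fact_step by (simp add: field_simps power2_eq_square)
  qed
  have "\<rho> \<longlonglongrightarrow> 0"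
    unfolding \<rho>_def by real_asymp
  then obtain N where \<rho>_small: "\<And>l. l \<ge> N \<Longrightarrow> \<rho> l < 1 / 2"
    using order_tendstoD(2)[of \<rho> 0 sequentially "1 / 2"] by (auto simp: eventually_sequentially)
  have u_nonneg: "u l \<ge> 0" for l
    using a R by (simp add: u_def less_imp_le[OF Gamma_real_pos])
  have "u (l + 2) \<le> 1 / 2 * u l" if "l \<ge> N" for l
    unfolding u_step using \<rho>_small[OF that] u_nonneg[of l] by (intro mult_right_mono) auto
  with u_nonneg have "summable u"
    by (intro summable_ratio_test_step2[of u "1 / 2" N]) auto
  then show ?thesis
    unfolding u_def[abs_def] .
qed

definition envelope :: "real \<Rightarrow> real" where
  "envelope x = (if x \<le> 1 then x powr (- 1 / 2) else x powr (- 2))"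

lemma integrable_envelope: "envelope integrable_on {0<..}"
proof -
  have "(\<lambda>x::real. x powr (- 1 / 2)) integrable_on {0<..1}"
    by (rule integrable_on_powr_from_0') auto
  then have near_0: "envelope integrable_on {0<..1}"
    by (rule integrable_spike[OF _ negligible_empty]) (simp add: envelope_def)
  have "(\<lambda>x::real. x powr (- 2)) integrable_on {1..}"
    using has_integral_powr_to_inf[of "- 2" 1] by (auto simp: integrable_on_def)
  moreover have "{1::real..} = insert 1 {1<..}"
    by auto
  ultimately have "(\<lambda>x::real. x powr (- 2)) integrable_on {1<..}"
    by (simp add: integrable_on_insert_iff)
  then have near_infinity: "envelope integrable_on {1<..}"
    by (rule integrable_spike[OF _ negligible_empty]) (simp add: envelope_def)
  have "{0<..1} \<inter> {1::real<..} = {}"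
    by auto
  then show ?thesis
    by (intro integrable_Un'[OF near_0 near_infinity]) auto
qed

lemma exp_minus_one_ge_power_div_fact:
  fixes y :: real
  assumes "y \<ge> 0" and "K > 0"
  shows "y ^ K / fact K \<le> exp y - 1"
proof -
  have "1 + y ^ K / fact K = (\<Sum>k\<in>{0, K}. y ^ k / fact k)"
    using \<open>K > 0\<close> by simp
  also have "\<dots> \<le> exp y"
    using \<open>y \<ge> 0\<close> by (intro sum_power_div_fact_le_exp) auto
  finally show ?thesis
    by simp
qed

lemma power_div_exp_sqrt_minus_one_le:
  fixes a x :: real
  assumes a: "a > 0" and x: "x > 0"
  shows "x ^ m / (exp (a * sqrt x) - 1) \<le> max (1 / a) (fact (2 * m + 4) / a ^ (2 * m + 4)) * envelope x"
proof (cases "x \<le> 1")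
  case True
  have "a * sqrt x \<le> exp (a * sqrt x) - 1"
    using exp_minus_one_ge_power_div_fact[of "a * sqrt x" 1] a x by simp
  moreover have "x ^ m \<le> 1"
    using True x by (simp add: power_le_one)
  ultimately have "x ^ m / (exp (a * sqrt x) - 1) \<le> 1 / (a * sqrt x)"
    using a x by (intro frac_le) auto
  also have "\<dots> = 1 / a * envelope x"
    using True x by (simp add: envelope_def powr_minus powr_half_sqrt[symmetric] powr_divide field_simps)
  also have "\<dots> \<le> max (1 / a) (fact (2 * m + 4) / a ^ (2 * m + 4)) * envelope x"
    using x by (intro mult_right_mono) (auto simp: envelope_def)
  finally show ?thesis .
next
  case False
  have "(sqrt x) ^ (2 * m + 4) = (sqrt x ^ 2) ^ (m + 2)"
  proof -
    have "2 * m + 4 = 2 * (m + 2)"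
      by simp
    then show ?thesis
      by (simp only: power_mult)
  qed
  also have "\<dots> = x ^ m * x\<^sup>2"
    using x by (simp add: power_add power2_eq_square)
  finally have "a ^ (2 * m + 4) * (x ^ m * x\<^sup>2) / fact (2 * m + 4) \<le> exp (a * sqrt x) - 1"
    using exp_minus_one_ge_power_div_fact[of "a * sqrt x" "2 * m + 4"] a x by (simp add: power_mult_distrib)
  then have "x ^ m / (exp (a * sqrt x) - 1) \<le> x ^ m / (a ^ (2 * m + 4) * (x ^ m * x\<^sup>2) / fact (2 * m + 4))"
    using a x by (intro divide_left_mono) auto
  also have "\<dots> = fact (2 * m + 4) / a ^ (2 * m + 4) * envelope x"
    using False x by (simp add: envelope_def powr_minus powr_realpow field_simps power2_eq_square)
  also have "\<dots> \<le> max (1 / a) (fact (2 * m + 4) / a ^ (2 * m + 4)) * envelope x"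
    using x by (intro mult_right_mono) (auto simp: envelope_def)
  finally show ?thesis .
qed

lemma power_mult_exp_sqrt_le:
  fixes a x :: real
  assumes a: "a > 0" and x: "x > 0"
  shows "x ^ m * exp (- a * sqrt x) \<le> max (1 / a) (fact (2 * m + 4) / a ^ (2 * m + 4)) * envelope x"
proof -
  have "exp (- a * sqrt x) \<le> 1 / (exp (a * sqrt x) - 1)"
    using a x frac_le[of 1 1 "exp (a * sqrt x) - 1" "exp (a * sqrt x)"] by (simp add: exp_minus inverse_eq_divide)
  then have "x ^ m * exp (- a * sqrt x) \<le> x ^ m / (exp (a * sqrt x) - 1)"
    using x by (metis mult_left_mono times_divide_eq_right mult_1_right zero_le_power less_imp_le)
  also have "\<dots> \<le> max (1 / a) (fact (2 * m + 4) / a ^ (2 * m + 4)) * envelope x"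
    by (rule power_div_exp_sqrt_minus_one_le[OF a x])
  finally show ?thesis .
qed

definition laplace_coeff :: "nat \<Rightarrow> real \<Rightarrow> nat \<Rightarrow> real" where
  "laplace_coeff m a l = (- a) ^ l / fact l * Gamma (real m + 1 + real l / 2)"

text \<open>The Laplace transform of \<open>x\<^sup>m exp (- a sqrt x)\<close>, written as a power series in \<open>c powr (-1/2)\<close> so that
  it is visibly continuous in \<open>c\<close> away from the closed negative real axis.\<close>
definition laplace_series :: "nat \<Rightarrow> real \<Rightarrow> complex \<Rightarrow> complex" where
  "laplace_series m a c =
     c powr (- of_real (real m + 1)) * (\<Sum>l. of_real (laplace_coeff m a l) * (c powr (- 1 / 2)) ^ l)"

lemma summable_laplace_coeff:
  "summable (\<lambda>l. of_real (laplace_coeff m a l) * (y :: complex) ^ l)"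
proof (rule summable_norm_cancel)
  have "norm (of_real (laplace_coeff m a l) * y ^ l)
          = Gamma (real m + 1 + real l / 2) / fact l * (\<bar>a\<bar> * cmod y) ^ l" for l
    by (simp add: laplace_coeff_def norm_mult norm_divide norm_power power_abs power_mult_distrib
        abs_of_pos[OF Gamma_real_pos])
  then show "summable (\<lambda>l. norm (of_real (laplace_coeff m a l) * y ^ l))"
    using summable_Gamma_half_series[of "real m + 1" "\<bar>a\<bar> * cmod y"] by simp
qed

lemma laplace_series_sums:
  assumes "c \<noteq> 0"
  shows "(\<lambda>l. of_real (laplace_coeff m a l) * c powr (- of_real (real m + 1 + real l / 2)))
           sums laplace_series m a c"
proof -
  have "c powr (- of_real (real m + 1 + real l / 2)) = c powr (- of_real (real m + 1)) * (c powr (- 1 / 2)) ^ l" for l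
    using assms by (simp add: powr_def exp_of_nat_mult[symmetric] exp_add[symmetric] algebra_simps)
  moreover have "(\<lambda>l. c powr (- of_real (real m + 1)) * (of_real (laplace_coeff m a l) * (c powr (- 1 / 2)) ^ l))
                   sums laplace_series m a c"
    unfolding laplace_series_def by (intro sums_mult summable_sums summable_laplace_coeff)
  ultimately show ?thesis
    by (simp add: mult_ac)
qed

lemma isCont_laplace_series:
  assumes "c \<notin> \<real>\<^sub>\<le>\<^sub>0"
  shows "isCont (laplace_series m a) c"
proof -
  have series: "isCont (\<lambda>y::complex. \<Sum>l. of_real (laplace_coeff m a l) * y ^ l) w" for w
    by (rule isCont_powser_converges_everywhere) (rule summable_laplace_coeff)
  have root: "isCont (\<lambda>c. c powr (- 1 / 2 :: complex)) c"
    using assms by (intro continuous_intros) auto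
  have power: "isCont (\<lambda>c. c powr (- of_real (real m + 1))) c"
    using assms by (intro continuous_intros) auto
  show ?thesis
    unfolding laplace_series_def[abs_def] by (rule isCont_mult[OF power isCont_o2[OF root series]])
qed

lemma Gamma_integral_complex_sqrt_power:
  fixes c :: complex
  assumes c: "Re c > 0"
  shows "((\<lambda>x. of_real (x ^ m * sqrt x ^ l) * exp (- c * of_real x)) has_integral
           of_real (Gamma (real m + 1 + real l / 2)) * c powr (- of_real (real m + 1 + real l / 2))) {0<..}"
proof -
  define s where "s = real m + 1 + real l / 2"
  have "s > 0"
    by (simp add: s_def add_pos_nonneg)
  have "x powr (s - 1) = x ^ m * sqrt x ^ l" if "x > 0" for x
  proof -
    have "x powr (s - 1) = x powr real m * (x powr (1 / 2)) powr real l"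
      by (simp add: s_def powr_add[symmetric] powr_powr)
    then show ?thesis
      using that by (simp add: powr_realpow powr_half_sqrt)
  qed
  then show ?thesis
    unfolding s_def[symmetric]
    by (intro has_integral_spike[OF negligible_empty _ Gamma_integral_complex_scaled[OF \<open>s > 0\<close> c]]) simp
qed

lemma mult_sqrt_le_AM_GM:
  fixes a e x :: real
  assumes "e > 0" and "x \<ge> 0"
  shows "a * sqrt x \<le> a\<^sup>2 / (2 * e) + e / 2 * x"
proof -
  have "0 \<le> (e * sqrt x - a)\<^sup>2"
    by simp
  then show ?thesis
    using assms by (simp add: power2_eq_square field_simps)
qed

text \<open>Termwise integration of \<open>exp (- a sqrt x) = \<Sum>l. (- a sqrt x)\<^sup>l / l!\<close>; the partial sums are dominated
  by \<open>x\<^sup>m exp (a sqrt x - Re c x)\<close>, which decays like \<open>exp (- Re c x / 2)\<close>.\<close>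
lemma has_integral_laplace_series:
  fixes a :: real and c :: complex
  assumes a: "a > 0" and c: "Re c > 0"
  shows "((\<lambda>x. of_real (x ^ m * exp (- a * sqrt x)) * exp (- c * of_real x)) has_integral laplace_series m a c) {0<..}"
proof -
  define e where "e = Re c"
  define f where "f l x = of_real ((- a * sqrt x) ^ l / fact l) * (of_real (x ^ m) * exp (- c * of_real x))" for l x
  have e: "e > 0"
    using c by (simp add: e_def)
  have term_integral: "(f l has_integral of_real (laplace_coeff m a l) * c powr (- of_real (real m + 1 + real l / 2))) {0<..}" for l
    using has_integral_mult_right[OF Gamma_integral_complex_sqrt_power[OF c], of "of_real ((- a) ^ l / fact l)" m l]
    by (simp only: f_def[abs_def] power_mult_distrib laplace_coeff_def of_real_mult of_real_divide
        times_divide_eq_left times_divide_eq_right mult_ac)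
  have dominating: "(\<lambda>x. exp (a\<^sup>2 / (2 * e)) * (x powr (real (m + 1) - 1) * exp (- (e / 2) * x))) integrable_on {0<..}"
    using Gamma_integral_scaled[of "real (m + 1)" "e / 2"] e by (intro integrable_on_mult_right) auto
  have bound: "norm (\<Sum>l<N. f l x) \<le> exp (a\<^sup>2 / (2 * e)) * (x powr (real (m + 1) - 1) * exp (- (e / 2) * x))"
    if "x \<in> {0<..}" for N x
  proof -
    have x: "x > 0"
      using that by simp
    have "norm (\<Sum>l<N. f l x) = \<bar>\<Sum>l<N. (- a * sqrt x) ^ l / fact l\<bar> * (x ^ m * exp (- e * x))"
      unfolding f_def sum_distrib_right[symmetric] of_real_sum[symmetric] norm_mult norm_of_real using x by (simp add: e_def)
    also have "\<dots> \<le> x ^ m * (exp (a * sqrt x) * exp (- e * x))"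
      using norm_exp_partial_sum_le[where N = N and z = "- a * sqrt x"] a x by (simp add: mult_right_mono)
    also have "\<dots> \<le> x ^ m * (exp (a\<^sup>2 / (2 * e)) * exp (- (e / 2) * x))"
      using mult_sqrt_le_AM_GM[OF e, of x a] x by (intro mult_left_mono) (auto simp: exp_add[symmetric])
    also have "\<dots> = exp (a\<^sup>2 / (2 * e)) * (x powr (real (m + 1) - 1) * exp (- (e / 2) * x))"
      using x by (simp add: powr_realpow)
    finally show ?thesis .
  qed
  have pointwise: "(\<lambda>l. f l x) sums (of_real (x ^ m * exp (- a * sqrt x)) * exp (- c * of_real x))" for x
  proof -
    have "(\<lambda>l. (- a * sqrt x) ^ l / fact l) sums exp (- a * sqrt x)"
      using exp_converges[of "- a * sqrt x"] by (simp add: divide_inverse_commute)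
    then have "(\<lambda>l. f l x) sums (of_real (exp (- a * sqrt x)) * (of_real (x ^ m) * exp (- c * of_real x)))"
      unfolding f_def by (intro sums_mult2 sums_of_real)
    then show ?thesis
      by (simp add: mult_ac)
  qed
  have "c \<noteq> 0"
    using c by auto
  then show ?thesis
    using has_integral_sums_dominated(2)[OF term_integral dominating bound pointwise]
      sums_unique[OF laplace_series_sums] by simp
qed

text \<open>Abel-type limit \<open>c \<rightarrow> - \<i> b\<close> from the right half-plane; \<open>envelope\<close> dominates uniformly in \<open>Re c \<ge> 0\<close>.\<close>
lemma has_integral_laplace_series_imaginary:
  fixes a b :: real
  assumes a: "a > 0" and b: "b > 0"
  shows "((\<lambda>x. of_real (x ^ m * exp (- a * sqrt x)) * exp (\<i> * of_real (b * x)))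
           has_integral laplace_series m a (- (\<i> * of_real b))) {0<..}"
proof -
  define c where "c j = of_real (1 / (real j + 1)) - \<i> * of_real b" for j :: nat
  define C where "C = max (1 / a) (fact (2 * m + 4) / a ^ (2 * m + 4))"
  have c_lim: "c \<longlonglongrightarrow> - (\<i> * of_real b)"
  proof -
    have "(\<lambda>j. 1 / (real j + 1)) \<longlonglongrightarrow> 0"
      using LIMSEQ_Suc[OF lim_1_over_n] by (simp add: add.commute)
    then have "c \<longlonglongrightarrow> of_real 0 - \<i> * of_real b"
      unfolding c_def by (intro tendsto_intros)
    then show ?thesis
      by simp
  qed
  have integrals: "((\<lambda>x. of_real (x ^ m * exp (- a * sqrt x)) * exp (- c j * of_real x))
                     has_integral laplace_series m a (c j)) {0<..}" for j
    by (rule has_integral_laplace_series[OF a]) (simp add: c_def)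
  have dominating: "(\<lambda>x. C * envelope x) integrable_on {0<..}"
    by (intro integrable_on_mult_right integrable_envelope)
  have bound: "\<forall>x\<in>{0<..}. norm (of_real (x ^ m * exp (- a * sqrt x)) * exp (- c j * of_real x)) \<le> C * envelope x" for j
  proof
    fix x :: real assume "x \<in> {0<..}"
    then have x: "x > 0"
      by simp
    have "norm (of_real (x ^ m * exp (- a * sqrt x)) * exp (- c j * of_real x))
            = x ^ m * exp (- a * sqrt x) * exp (- (1 / (real j + 1)) * x)"
      using x by (simp add: c_def norm_mult norm_power)
    also have "\<dots> \<le> x ^ m * exp (- a * sqrt x)"
      using x by (intro mult_left_le) auto
    also have "\<dots> \<le> C * envelope x"
      unfolding C_def by (rule power_mult_exp_sqrt_le[OF a x])
    finally show "norm (of_real (x ^ m * exp (- a * sqrt x)) * exp (- c j * of_real x)) \<le> C * envelope x" .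
  qed
  have pointwise: "\<forall>x\<in>{0<..}. (\<lambda>j. of_real (x ^ m * exp (- a * sqrt x)) * exp (- c j * of_real x))
                     \<longlonglongrightarrow> of_real (x ^ m * exp (- a * sqrt x)) * exp (\<i> * of_real (b * x))"
    using c_lim by (auto intro!: tendsto_eq_intros simp: mult.assoc)
  have "(\<lambda>j. laplace_series m a (c j)) \<longlonglongrightarrow> laplace_series m a (- (\<i> * of_real b))"
    using b by (intro isCont_tendsto_compose[OF isCont_laplace_series c_lim]) (auto simp: complex_nonpos_Reals_iff)
  then show ?thesis
    by (rule has_integral_dominated_convergence[OF integrals dominating bound pointwise])
qed

lemma powr_minus_imaginary:
  fixes b s :: real
  assumes b: "b > 0"
  shows "(- (\<i> * of_real b)) powr (- of_real s) = of_real (b powr (- s)) * exp (\<i> * of_real (pi * s / 2))"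
proof -
  have Ln: "Ln (- (\<i> * of_real b)) = of_real (ln b) - \<i> * of_real (pi / 2)"
    using Ln_times_of_real[of b "- \<i>"] b by (simp add: Ln_of_real ac_simps)
  have "(- (\<i> * of_real b)) powr (- of_real s) = exp (- of_real s * Ln (- (\<i> * of_real b)))"
    using b by (simp add: powr_def)
  also have "\<dots> = exp (of_real (- s * ln b)) * exp (\<i> * of_real (pi * s / 2))"
    unfolding Ln exp_add[symmetric] by (simp add: algebra_simps)
  also have "exp (of_real (- s * ln b)) = of_real (b powr (- s))"
    using b exp_of_real[of "- s * ln b"] by (simp add: powr_def)
  finally show ?thesis .
qed

definition ramanujan_term :: "nat \<Rightarrow> real \<Rightarrow> nat \<Rightarrow> real" where
  "ramanujan_term m w l =
     1 / fact l * w ^ l * Gamma (real m + 1 + real l / 2) * sin (real m * pi / 2 + real l * pi / 4)"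

lemma abs_ramanujan_term_le: "\<bar>ramanujan_term m w l\<bar> \<le> Gamma (real m + 1 + real l / 2) / fact l * \<bar>w\<bar> ^ l"
proof -
  have "Gamma (real m + 1 + real l / 2) > 0"
    by (rule Gamma_real_pos) simp
  then have "\<bar>ramanujan_term m w l\<bar>
               = Gamma (real m + 1 + real l / 2) / fact l * \<bar>w\<bar> ^ l * \<bar>sin (real m * pi / 2 + real l * pi / 4)\<bar>"
    by (simp add: ramanujan_term_def abs_mult power_abs)
  also have "\<dots> \<le> Gamma (real m + 1 + real l / 2) / fact l * \<bar>w\<bar> ^ l"
    using \<open>Gamma (real m + 1 + real l / 2) > 0\<close> by (intro mult_left_le) auto
  finally show ?thesis .
qed

lemma summable_abs_ramanujan_term: "summable (\<lambda>l. \<bar>ramanujan_term m w l\<bar>)"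
proof (rule summable_comparison_test')
  show "summable (\<lambda>l. Gamma (real m + 1 + real l / 2) / fact l * \<bar>w\<bar> ^ l)"
    using summable_Gamma_half_series[of "real m + 1" "\<bar>w\<bar>"] by (simp add: add.assoc)
  show "norm \<bar>ramanujan_term m w l\<bar> \<le> Gamma (real m + 1 + real l / 2) / fact l * \<bar>w\<bar> ^ l" for l
    using abs_ramanujan_term_le by simp
qed

lemma summable_ramanujan_term: "summable (ramanujan_term m w)"
  by (rule summable_rabs_cancel[OF summable_abs_ramanujan_term])

lemma Re_laplace_term_imaginary:
  fixes a b :: real
  assumes b: "b > 0"
  shows "Re (of_real (laplace_coeff m a l) * (- (\<i> * of_real b)) powr (- of_real (real m + 1 + real l / 2)))
           = - (b powr (- real m - 1)) * ramanujan_term m (- a / sqrt b) l"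
proof -
  define s where "s = real m + 1 + real l / 2"
  have "pi * s / 2 = (real m * pi / 2 + real l * pi / 4) + pi / 2"
    by (simp add: s_def field_simps)
  then have cos_eq: "cos (pi * s / 2) = - sin (real m * pi / 2 + real l * pi / 4)"
    by (simp only: cos_add cos_pi_half sin_pi_half)
  have exponent: "- s = (- real m - 1) + (- 1 / 2 * real l)"
    by (simp add: s_def)
  have "b powr (- s) = b powr (- real m - 1) * (b powr (- 1 / 2)) powr real l"
    unfolding exponent powr_add by (simp only: powr_powr)
  also have "\<dots> = b powr (- real m - 1) * (1 / sqrt b) ^ l"
    using b by (simp add: powr_realpow powr_minus_divide powr_half_sqrt)
  finally have powr_eq: "b powr (- s) = b powr (- real m - 1) * (1 / sqrt b) ^ l" .
  have "(- a / sqrt b) ^ l = (- a) ^ l * (1 / sqrt b) ^ l"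
    by (simp add: power_mult_distrib[symmetric])
  moreover have "Re (of_real (laplace_coeff m a l) * (- (\<i> * of_real b)) powr (- of_real s))
                   = laplace_coeff m a l * b powr (- s) * cos (pi * s / 2)"
    unfolding powr_minus_imaginary[OF b] by (simp add: Re_exp)
  ultimately show ?thesis
    unfolding s_def[symmetric] cos_eq powr_eq unfolding laplace_coeff_def ramanujan_term_def s_def
    by (simp add: mult_ac)
qed

lemma Re_laplace_series_imaginary:
  fixes a b :: real
  assumes b: "b > 0"
  shows "Re (laplace_series m a (- (\<i> * of_real b))) = - (b powr (- real m - 1)) * (\<Sum>l. ramanujan_term m (- a / sqrt b) l)"
proof -
  have "(\<lambda>l. Re (of_real (laplace_coeff m a l) * (- (\<i> * of_real b)) powr (- of_real (real m + 1 + real l / 2))))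
          sums Re (laplace_series m a (- (\<i> * of_real b)))"
    using laplace_series_sums[of "- (\<i> * of_real b)" m a] b by (simp add: sums_complex_iff)
  moreover have "(\<lambda>l. - (b powr (- real m - 1)) * ramanujan_term m (- a / sqrt b) l)
                   sums (- (b powr (- real m - 1)) * (\<Sum>l. ramanujan_term m (- a / sqrt b) l))"
    by (intro sums_mult summable_sums summable_ramanujan_term)
  ultimately show ?thesis
    unfolding Re_laplace_term_imaginary[OF b] by (rule sums_unique2)
qed

lemma has_integral_cos_exp_sqrt:
  fixes a b :: real
  assumes a: "a > 0" and b: "b > 0"
  shows "((\<lambda>x. x ^ m * cos (b * x) * exp (- a * sqrt x)) has_integral
           - (b powr (- real m - 1)) * (\<Sum>l. ramanujan_term m (- a / sqrt b) l)) {0<..}"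
proof -
  have "((\<lambda>x. Re (of_real (x ^ m * exp (- a * sqrt x)) * exp (\<i> * of_real (b * x)))) has_integral
          Re (laplace_series m a (- (\<i> * of_real b)))) {0<..}"
    using has_integral_linear[OF has_integral_laplace_series_imaginary[OF a b] bounded_linear_Re]
    by (simp add: o_def)
  then show ?thesis
    by (simp add: Re_laplace_series_imaginary[OF b] Re_exp mult_ac)
qed

lemma exp_geometric_sums:
  fixes t :: real
  assumes "t > 0"
  shows "(\<lambda>k. exp (- (real k + 1) * t)) sums (1 / (exp t - 1))"
proof -
  have "(\<lambda>k. exp (- t) * exp (- t) ^ k) sums (exp (- t) * (1 / (1 - exp (- t))))"
    using assms by (intro sums_mult geometric_sums) simp
  moreover have "exp (- t) * exp (- t) ^ k = exp (- (real k + 1) * t)" for k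
    by (simp add: exp_of_nat_mult[symmetric] exp_add[symmetric] algebra_simps)
  moreover have "exp (- t) * (1 / (1 - exp (- t))) = 1 / (exp t - 1)"
    using assms by (simp add: exp_minus field_simps)
  ultimately show ?thesis
    by simp
qed

lemma ramanujan_integral_sums:
  fixes n :: real
  assumes n: "n > 0"
  shows "(\<lambda>k. - ((n * pi) powr (- real m - 1)) * (\<Sum>l. ramanujan_term m (- (2 * pi + 2 * pi * real k) / sqrt (n * pi)) l))
           sums RamanujanRC m n"
proof -
  define C where "C = max (1 / (2 * pi)) (fact (2 * m + 4) / (2 * pi) ^ (2 * m + 4))"
  define f where "f k x = x ^ m * cos (n * pi * x) * exp (- (2 * pi + 2 * pi * real k) * sqrt x)" for k x
  have term_integral: "(f k has_integral
                          - ((n * pi) powr (- real m - 1)) * (\<Sum>l. ramanujan_term m (- (2 * pi + 2 * pi * real k) / sqrt (n * pi)) l))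
                        {0<..}" for k
    unfolding f_def using n by (intro has_integral_cos_exp_sqrt) (auto intro: add_pos_nonneg)
  have dominating: "(\<lambda>x. C * envelope x) integrable_on {0<..}"
    by (intro integrable_on_mult_right integrable_envelope)
  have kernel: "(\<lambda>k. exp (- (2 * pi + 2 * pi * real k) * sqrt x)) sums (1 / (exp (2 * pi * sqrt x) - 1))" if "x > 0" for x
    using exp_geometric_sums[of "2 * pi * sqrt x"] that by (simp add: algebra_simps)
  have bound: "norm (\<Sum>k<N. f k x) \<le> C * envelope x" if "x \<in> {0<..}" for N x
  proof -
    have x: "x > 0"
      using that by simp
    define S where "S = (\<Sum>k<N. exp (- (2 * pi + 2 * pi * real k) * sqrt x))"
    have "S \<ge> 0"
      unfolding S_def by (intro sum_nonneg) simp
    have "S \<le> 1 / (exp (2 * pi * sqrt x) - 1)"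
      unfolding S_def sums_unique[OF kernel[OF x]] by (intro sum_le_suminf sums_summable[OF kernel[OF x]]) auto
    have "norm (\<Sum>k<N. f k x) = x ^ m * (\<bar>cos (n * pi * x)\<bar> * S)"
      unfolding f_def sum_distrib_left[symmetric] S_def[symmetric] using x \<open>S \<ge> 0\<close> by (simp add: abs_mult)
    also have "\<dots> \<le> x ^ m * (1 * (1 / (exp (2 * pi * sqrt x) - 1)))"
      using x \<open>S \<ge> 0\<close> \<open>S \<le> _\<close> by (intro mult_left_mono mult_mono abs_cos_le_one) auto
    also have "\<dots> = x ^ m / (exp (2 * pi * sqrt x) - 1)"
      by simp
    also have "\<dots> \<le> C * envelope x"
      unfolding C_def using x by (intro power_div_exp_sqrt_minus_one_le) auto
    finally show ?thesis .
  qed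
  have pointwise: "(\<lambda>k. f k x) sums (x ^ m * cos (pi * n * x) / (- 1 + exp (2 * pi * sqrt x)))" if "x \<in> {0<..}" for x
    unfolding f_def using sums_mult[OF kernel, of x "x ^ m * cos (n * pi * x)"] that by (simp add: mult_ac)
  show ?thesis
    using has_integral_sums_dominated(1)[OF term_integral dominating bound pointwise] by (simp add: RamanujanRC_def)
qed

lemma Gamma_add_twice_nat:
  fixes a :: real
  assumes a: "a > 0"
  shows "Gamma (a + 2 * real i) = Gamma a * 4 ^ i * pochhammer (a / 2) i * pochhammer ((a + 1) / 2) i"
proof (induction i)
  case (Suc i)
  have "a + 2 * real i \<notin> \<int>\<^sub>\<le>\<^sub>0" "a + 2 * real i + 1 \<notin> \<int>\<^sub>\<le>\<^sub>0"
    using a by (auto elim!: nonpos_Ints_cases)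
  then have "Gamma (a + 2 * real (Suc i)) = (a + 2 * real i + 1) * (a + 2 * real i) * Gamma (a + 2 * real i)"
    using Gamma_plus1[of "a + 2 * real i"] Gamma_plus1[of "a + 2 * real i + 1"] by (simp add: algebra_simps)
  with Suc.IH show ?case
    by (simp add: pochhammer_Suc field_simps)
qed simp

lemma fact_quadruple_add:
  "(fact (4 * i + j) :: real) = fact j * 256 ^ i * pochhammer ((real j + 1) / 4) i * pochhammer ((real j + 2) / 4) i
       * pochhammer ((real j + 3) / 4) i * pochhammer ((real j + 4) / 4) i"
proof (induction i)
  case (Suc i)
  have "4 * Suc i + j = Suc (Suc (Suc (Suc (4 * i + j))))"
    by simp
  have "(fact (4 * Suc i + j) :: real)
          = fact (4 * i + j) * ((4 * i + j + 1) * (4 * i + j + 2) * (4 * i + j + 3) * (4 * i + j + 4))"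
    unfolding \<open>4 * Suc i + j = _\<close> by (simp add: algebra_simps)
  with Suc.IH show ?case
    by (simp add: pochhammer_Suc field_simps)
qed simp

text \<open>The \<open>i\<close>-th term of the series of \<open>G m j\<close>, for \<open>j < 4\<close>, in a form uniform in \<open>j\<close>: exactly one of the four
  lower parameters \<open>(j + r) / 4\<close> equals \<open>1\<close> and supplies the \<open>i!\<close> of the \<open>\<^sub>2F\<^sub>3\<close> series.\<close>
definition G_term :: "nat \<Rightarrow> nat \<Rightarrow> real \<Rightarrow> nat \<Rightarrow> real" where
  "G_term m j z i =
     pochhammer ((real m + 1 + real j / 2) / 2) i * pochhammer ((real m + 1 + real j / 2 + 1) / 2) i /
     (pochhammer ((real j + 1) / 4) i * pochhammer ((real j + 2) / 4) i * pochhammer ((real j + 3) / 4) i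
      * pochhammer ((real j + 4) / 4) i) * z ^ i"

lemma G_eq_suminf_G_term:
  assumes "j < 4"
  shows "G m j z = (\<Sum>i. G_term m j z i)"
proof -
  have "j = 0 \<or> j = 1 \<or> j = 2 \<or> j = 3"
    using assms by auto
  then show ?thesis
    by (elim disjE) (simp_all add: G_def hyp2F3_def G_term_def pochhammer_fact field_simps)
qed

lemma ramanujan_term_quadruple_add:
  "ramanujan_term m w (4 * i + j) = ramanujan_term m w j * G_term m j (- (w ^ 4) / 64) i"
proof -
  define a where "a = real m + 1 + real j / 2"
  define \<theta> where "\<theta> = real m * pi / 2 + real j * pi / 4"
  define P where "P = pochhammer ((real j + 1) / 4) i * pochhammer ((real j + 2) / 4) i
                        * pochhammer ((real j + 3) / 4) i * pochhammer ((real j + 4) / 4) i"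
  have "P > 0"
    unfolding P_def by (intro mult_pos_pos pochhammer_pos) auto
  have "real m + 1 + real (4 * i + j) / 2 = a + 2 * real i"
    by (simp add: a_def)
  then have Gamma_eq: "Gamma (real m + 1 + real (4 * i + j) / 2)
                         = Gamma a * 4 ^ i * pochhammer (a / 2) i * pochhammer ((a + 1) / 2) i"
    by (simp only:) (rule Gamma_add_twice_nat, simp add: a_def)
  have "real m * pi / 2 + real (4 * i + j) * pi / 4 = \<theta> + real i * pi"
    by (simp add: \<theta>_def field_simps)
  then have sin_eq: "sin (real m * pi / 2 + real (4 * i + j) * pi / 4) = (- 1) ^ i * sin \<theta>"
    by (simp add: sin_add sin_npi cos_npi)
  have fact_eq: "(fact (4 * i + j) :: real) = fact j * (4 ^ i * 64 ^ i) * P"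
    unfolding P_def fact_quadruple_add by (simp add: power_mult_distrib[symmetric] mult.assoc)
  have power_eq: "w ^ (4 * i + j) = w ^ j * (w ^ 4) ^ i"
    by (simp add: power_add power_mult)
  have "(- (w ^ 4) / 64) ^ i = (- 1) ^ i * ((w ^ 4) ^ i / 64 ^ i)"
    by (simp only: power_mult_distrib[symmetric] power_divide[symmetric]) simp
  then have G_term_eq: "G_term m j (- (w ^ 4) / 64) i
                          = pochhammer (a / 2) i * pochhammer ((a + 1) / 2) i / P * ((- 1) ^ i * ((w ^ 4) ^ i / 64 ^ i))"
    unfolding G_term_def P_def a_def by simp
  show ?thesis
    unfolding ramanujan_term_def Gamma_eq sin_eq fact_eq power_eq G_term_eq a_def[symmetric] \<theta>_def[symmetric]
    using \<open>P > 0\<close> by (simp add: field_simps)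
qed

lemma summable_ramanujan_term_residue: "summable (\<lambda>i. ramanujan_term m w (4 * i + j))"
proof (rule summable_rabs_cancel)
  have "summable ((\<lambda>l. \<bar>ramanujan_term m w l\<bar>) \<circ> (\<lambda>i. 4 * i + j))"
    by (rule summable_reindex[OF summable_abs_ramanujan_term]) (auto simp: inj_def)
  then show "summable (\<lambda>i. \<bar>ramanujan_term m w (4 * i + j)\<bar>)"
    by (simp add: o_def)
qed

lemma suminf_ramanujan_term_eq_G:
  "(\<Sum>l. ramanujan_term m w l) = (\<Sum>j\<le>3. ramanujan_term m w j * G m j (- (w ^ 4) / 64))"
proof -
  define z where "z = - (w ^ 4) / 64"
  have residue: "(\<lambda>i. ramanujan_term m w (4 * i + j)) sums (ramanujan_term m w j * G m j z)" if "j < 4" for j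
  proof (cases "ramanujan_term m w j = 0")
    case True
    then show ?thesis
      by (simp add: ramanujan_term_quadruple_add)
  next
    case False
    then have "summable (G_term m j z)"
      using summable_ramanujan_term_residue[of m w j]
      by (simp add: ramanujan_term_quadruple_add z_def summable_cmult_iff)
    then have "G_term m j z sums G m j z"
      using G_eq_suminf_G_term[OF that] by (simp add: summable_sums)
    then show ?thesis
      unfolding ramanujan_term_quadruple_add z_def[symmetric] by (rule sums_mult)
  qed
  have "(\<lambda>i. \<Sum>j<4. ramanujan_term m w (4 * i + j)) sums (\<Sum>j<4. ramanujan_term m w j * G m j z)"
    by (intro sums_sum residue) auto
  moreover have "(\<Sum>j<4. ramanujan_term m w (4 * i + j)) = sum (ramanujan_term m w) {i * 4..<i * 4 + 4}" for i
    using sum.shift_bounds_nat_ivl[of "ramanujan_term m w" 0 "4 * i" 4] by (simp add: lessThan_atLeast0 algebra_simps)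
  ultimately have "(\<lambda>i. sum (ramanujan_term m w) {i * 4..<i * 4 + 4}) sums (\<Sum>j<4. ramanujan_term m w j * G m j z)"
    by simp
  moreover have "(\<lambda>i. sum (ramanujan_term m w) {i * 4..<i * 4 + 4}) sums (\<Sum>l. ramanujan_term m w l)"
    by (rule sums_group[OF summable_sums[OF summable_ramanujan_term]]) simp
  ultimately have "(\<Sum>l. ramanujan_term m w l) = (\<Sum>j<4. ramanujan_term m w j * G m j z)"
    by (rule sums_unique2[symmetric])
  also have "{..<4::nat} = {..3}"
    by auto
  finally show ?thesis
    unfolding z_def .
qed

lemma ramanujan_G_argument:
  fixes n :: real
  assumes n: "n > 0"
  shows "- ((- (2 * pi + 2 * pi * real k) / sqrt (n * pi)) ^ 4) / 64 = - (pi ^ 2 * (real k + 1) ^ 4) / (4 * n ^ 2)"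
proof -
  have "(sqrt (n * pi)) ^ 4 = ((sqrt (n * pi))\<^sup>2)\<^sup>2"
    by (simp add: power_mult[symmetric])
  also have "\<dots> = (n * pi)\<^sup>2"
    using n by simp
  finally have sqrt_power: "(sqrt (n * pi)) ^ 4 = (n * pi)\<^sup>2" .
  have "- (2 * pi + 2 * pi * real k) = - (2 * pi * (real k + 1))"
    by (simp add: algebra_simps)
  then have "(- (2 * pi + 2 * pi * real k) / sqrt (n * pi)) ^ 4 = (2 * pi * (real k + 1)) ^ 4 / (n * pi)\<^sup>2"
    unfolding power_divide sqrt_power by simp
  then show ?thesis
    using n by (simp add: field_simps power2_eq_square power4_eq_xxxx)
qed

theorem mainTheorem6:
  fixes m :: nat and n :: real
  assumes "n \<in> \<rat>" and "n > 0"
  shows "((\<lambda>k::nat. - ((n * pi) powr (- real m - 1)) *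
            (\<Sum>l. (1 / fact l) * (- (2 * pi + 2 * pi * real k) / sqrt (n * pi)) ^ l
                   * Gamma (real m + 1 + real l / 2)
                   * sin (real m * pi / 2 + real l * pi / 4)))
           sums RamanujanRC m n) \<and>
         ((\<lambda>k::nat. - ((n * pi) powr (- real m - 1)) *
            (\<Sum>j\<le>3. (1 / fact j) * (- (2 * pi + 2 * pi * real k) / sqrt (n * pi)) ^ j
                   * Gamma (real m + 1 + real j / 2)
                   * sin (real m * pi / 2 + real j * pi / 4)
                   * G m j (- (pi ^ 2 * (real k + 1) ^ 4) / (4 * n ^ 2))))
           sums RamanujanRC m n)"
proof -
  have regroup: "(\<Sum>l. ramanujan_term m (- (2 * pi + 2 * pi * real k) / sqrt (n * pi)) l)
                   = (\<Sum>j\<le>3. ramanujan_term m (- (2 * pi + 2 * pi * real k) / sqrt (n * pi)) j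
                                 * G m j (- (pi ^ 2 * (real k + 1) ^ 4) / (4 * n ^ 2)))" for k
    unfolding suminf_ramanujan_term_eq_G ramanujan_G_argument[OF \<open>n > 0\<close>] ..
  have "(\<lambda>k. - ((n * pi) powr (- real m - 1)) * (\<Sum>l. ramanujan_term m (- (2 * pi + 2 * pi * real k) / sqrt (n * pi)) l))
          sums RamanujanRC m n"
    by (rule ramanujan_integral_sums[OF \<open>n > 0\<close>])
  moreover from this have "(\<lambda>k. - ((n * pi) powr (- real m - 1)) *
                             (\<Sum>j\<le>3. ramanujan_term m (- (2 * pi + 2 * pi * real k) / sqrt (n * pi)) j
                                     * G m j (- (pi ^ 2 * (real k + 1) ^ 4) / (4 * n ^ 2))))
                          sums RamanujanRC m n"
    unfolding regroup .
  ultimately show ?thesis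
    by (simp only: ramanujan_term_def)
qed

end
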